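(* $\mathrm{Aut}_{\mathbb Z}(L)$ is equal to each of the groups $\langle -(x\,y)\rangle\ltimes G$, $\langle -(y\,z)\rangle\ltimes G$, $\langle -(z\,x)\rangle\ltimes G$. In particular $\mathrm{Aut}_{\mathbb Z}(L)\cong\mathbb Z_2\ltimes G$.
   Context: $\mathbb F$ is a field of characteristic zero, $\mathfrak{sl}_2$ the Lie algebra of $2\times2$ trace-zero matrices over $\mathbb F$. Equitable basis: $x=\begin{pmatrix}1&0\\0&-1\end{pmatrix}$, $y=\begin{pmatrix}-1&2\\0&1\end{pmatrix}$, $z=\begin{pmatrix}-1&0\\-2&1\end{pmatrix}$, and $L=\mathbb Zx\oplus\mathbb Zy\oplus\mathbb Zz$. Let $x^*=\begin{pmatrix}1&-1\\1&-1\end{pmatrix}$, $y^*=\begin{pmatrix}0&0\\1&0\end{pmatrix}$, $z^*=\begin{pmatrix}0&-1\\0&0\end{pmatrix}$; $G$ is the subgroup of $\mathrm{Aut}_{\mathbb F}(\mathfrak{sl}_2)$ generated by $\exp(\mathrm{ad}\,x^* ),\exp(\mathrm{ad}\,y^* ),\exp(\mathrm{ad}\,z^* )$. $\mathrm{Aut}_{\mathbb Z}(L)$ is the group of Lie algebra automorphisms $\varphi$ of $\mathfrak{sl}_2$ with $\varphi(L)=L$. For distinct $u,v\in\{x,y,z\}$, $(u\,v)$ is the $\mathbb F$-linear map interchanging $u,v$ and fixing the third basis element, and $-(u\,v)$ is its negative. *)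

theory Defs
  imports "HOL-Algebra.Algebra"
begin

datatype 'a m2 = M2 'a 'a 'a 'a  (* entries (1,1) (1,2) (2,1) (2,2) *)

fun madd :: "'a::field m2 \<Rightarrow> 'a m2 \<Rightarrow> 'a m2" where
  "madd (M2 p q r s) (M2 p2 q2 r2 s2) = M2 (p + p2) (q + q2) (r + r2) (s + s2)"

fun msub :: "'a::field m2 \<Rightarrow> 'a m2 \<Rightarrow> 'a m2" where
  "msub (M2 p q r s) (M2 p2 q2 r2 s2) = M2 (p - p2) (q - q2) (r - r2) (s - s2)"

fun mneg :: "'a::field m2 \<Rightarrow> 'a m2" where
  "mneg (M2 p q r s) = M2 (- p) (- q) (- r) (- s)"

fun msmult :: "'a::field \<Rightarrow> 'a m2 \<Rightarrow> 'a m2" where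
  "msmult k (M2 p q r s) = M2 (k * p) (k * q) (k * r) (k * s)"

fun mmul :: "'a::field m2 \<Rightarrow> 'a m2 \<Rightarrow> 'a m2" where
  "mmul (M2 p q r s) (M2 p2 q2 r2 s2) =
     M2 (p * p2 + q * r2) (p * q2 + q * s2) (r * p2 + s * r2) (r * q2 + s * s2)"

fun mtrace :: "'a::field m2 \<Rightarrow> 'a" where
  "mtrace (M2 p q r s) = p + s"

definition sl2 :: "'a::field_char_0 m2 set" where
  "sl2 = {A. mtrace A = 0}"

definition br :: "'a::field m2 \<Rightarrow> 'a m2 \<Rightarrow> 'a m2" where
  "br A B = msub (mmul A B) (mmul B A)"

definition lie_aut :: "('a::field_char_0 m2 \<Rightarrow> 'a m2) \<Rightarrow> bool" where
  "lie_aut \<phi> \<longleftrightarrow> \<phi> \<in> Bij sl2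
     \<and> (\<forall>k. \<forall>A\<in>sl2. \<forall>B\<in>sl2. \<phi> (madd (msmult k A) B) = madd (msmult k (\<phi> A)) (\<phi> B))
     \<and> (\<forall>A\<in>sl2. \<forall>B\<in>sl2. \<phi> (br A B) = br (\<phi> A) (\<phi> B))"

definition ex :: "'a::field_char_0 m2" where "ex = M2 1 0 0 (-1)"
definition ey :: "'a::field_char_0 m2" where "ey = M2 (-1) 2 0 1"
definition ez :: "'a::field_char_0 m2" where "ez = M2 (-1) 0 (-2) 1"

definition Lat :: "'a::field_char_0 m2 set" where
  "Lat = {madd (msmult (of_int a) ex) (madd (msmult (of_int b) ey) (msmult (of_int c) ez))
          | a b c :: int. True}"

definition AutZ :: "('a::field_char_0 m2 \<Rightarrow> 'a m2) set" where
  "AutZ = {\<phi>. lie_aut \<phi> \<and> \<phi> ` Lat = Lat}"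

text \<open>Coordinates w.r.t. the equitable basis:
  a x + b y + c z = M2 (a-b-c) (2b) (-2c) (-a+b+c).\<close>
fun cy :: "'a::field_char_0 m2 \<Rightarrow> 'a" where "cy (M2 p q r s) = q / 2"
fun cz :: "'a::field_char_0 m2 \<Rightarrow> 'a" where "cz (M2 p q r s) = - r / 2"
fun cx :: "'a::field_char_0 m2 \<Rightarrow> 'a" where "cx (M2 p q r s) = p + q / 2 - r / 2"

definition lin_map :: "'a::field_char_0 m2 \<Rightarrow> 'a m2 \<Rightarrow> 'a m2 \<Rightarrow> ('a m2 \<Rightarrow> 'a m2)" where
  "lin_map u v w = (\<lambda>A\<in>sl2. madd (msmult (cx A) u) (madd (msmult (cy A) v) (msmult (cz A) w)))"

definition neg_swap_xy :: "'a::field_char_0 m2 \<Rightarrow> 'a m2" where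
  "neg_swap_xy = lin_map (mneg ey) (mneg ex) (mneg ez)"
definition neg_swap_yz :: "'a::field_char_0 m2 \<Rightarrow> 'a m2" where
  "neg_swap_yz = lin_map (mneg ex) (mneg ez) (mneg ey)"
definition neg_swap_zx :: "'a::field_char_0 m2 \<Rightarrow> 'a m2" where
  "neg_swap_zx = lin_map (mneg ez) (mneg ey) (mneg ex)"

text \<open>exp(ad u) for u with u^2 = 0 (so (ad u)^3 = 0): 1 + ad u + (ad u)^2/2.\<close>
definition exp_ad :: "'a::field_char_0 m2 \<Rightarrow> ('a m2 \<Rightarrow> 'a m2)" where
  "exp_ad u = (\<lambda>A\<in>sl2. madd A (madd (br u A) (msmult (1/2) (br u (br u A)))))"

definition xs :: "'a::field_char_0 m2" where "xs = M2 1 (-1) 1 (-1)"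
definition ys :: "'a::field_char_0 m2" where "ys = M2 0 0 1 0"
definition zs :: "'a::field_char_0 m2" where "zs = M2 0 (-1) 0 0"

definition Ggrp :: "('a::field_char_0 m2 \<Rightarrow> 'a m2) set" where
  "Ggrp = generate (BijGroup sl2) {exp_ad xs, exp_ad ys, exp_ad zs}"

definition internal_semidirect :: "('g, 'b) monoid_scheme \<Rightarrow> 'g set \<Rightarrow> 'g set \<Rightarrow> 'g set \<Rightarrow> bool" where
  "internal_semidirect Gr K H N \<longleftrightarrow>
     subgroup K Gr \<and> subgroup H Gr \<and> normal N (Gr\<lparr>carrier := K\<rparr>)
     \<and> H \<inter> N = {\<one>\<^bsub>Gr\<^esub>} \<and> H <#>\<^bsub>Gr\<^esub> N = K"

end

theory Submission
  imports Defs
begin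

text \<open>
  Identify sl2 with the trace-zero matrices; then L consists of the matrices with integer
  diagonal and even off-diagonal entries, and every element of G is conjugation by a matrix
  in SL2(Z).  An integral automorphism \<open>\<chi>\<close> maps \<open>e = [[0,2],[0,0]]\<close>, an ad-eigenvector of \<open>h\<close>, to a
  nilpotent lattice element with coordinates \<open>(2s, q, r)\<close>, \<open>s\<^sup>2 = -qr\<close>.  Composing \<open>\<chi>\<close> with
  conjugations by elementary matrices, which lie in G, strictly decreases \<open>|q| + |r|\<close> until
  \<open>\<chi> e = \<plusminus>e\<close>.  An integral automorphism fixing \<open>e\<close> maps \<open>h\<close> to \<open>h + b e\<close> and is therefore
  conjugation by an upper unitriangular matrix, while \<open>-(x y)\<close> maps \<open>e\<close> to \<open>-e\<close>; hence
  \<open>Aut\<^sub>Z(L) = G \<union> -(x y) G\<close>.  Conjugation by SL2(Z) maps \<open>e\<close> to \<open>(-2ac, a\<^sup>2, -c\<^sup>2)\<close>, and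
  each of the three involutions \<open>-(u v)\<close> violates this sign pattern, so none lies in G and each
  generates a complement of order two.
\<close>

section \<open>Complements of index two\<close>

lemma (in group) generate_involution:
  assumes "\<sigma> \<in> carrier G" and "\<sigma> \<otimes> \<sigma> = \<one>"
  shows "generate G {\<sigma>} = {\<one>, \<sigma>}"
proof
  have "subgroup {\<one>, \<sigma>} G"
    using assms inv_equality[OF assms(2)] by (intro subgroupI) auto
  then show "generate G {\<sigma>} \<subseteq> {\<one>, \<sigma>}"
    by (intro generate_subgroup_incl) simp_all
  show "{\<one>, \<sigma>} \<subseteq> generate G {\<sigma>}"
    using generate.one[of G "{\<sigma>}"] generate.incl[of \<sigma> "{\<sigma>}" G] by auto
qed

lemma (in group) subgroup_mult_cancel_left:
  assumes "subgroup H G" and "h \<in> H" and "x \<in> carrier G" and "h \<otimes> x \<in> H"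
  shows "x \<in> H"
proof -
  interpret H: subgroup H G by (rule assms(1))
  have "inv h \<otimes> (h \<otimes> x) \<in> H" using assms(2,4) by blast
  then show ?thesis using assms(2,3) by (simp add: m_assoc[symmetric])
qed

lemma (in group) set_mult_involution_cover:
  assumes K: "subgroup K G" and "N \<subseteq> K" and "\<sigma> \<in> K" and \<sigma>\<sigma>: "\<sigma> \<otimes> \<sigma> = \<one>"
    and cover: "\<forall>k\<in>K. k \<in> N \<or> \<sigma> \<otimes> k \<in> N"
  shows "{\<one>, \<sigma>} <#> N = K"
proof
  interpret K: subgroup K G by (rule K)
  show "{\<one>, \<sigma>} <#> N \<subseteq> K"
    unfolding set_mult_def using \<open>N \<subseteq> K\<close> \<open>\<sigma> \<in> K\<close> by auto
  show "K \<subseteq> {\<one>, \<sigma>} <#> N"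
  proof
    fix k assume "k \<in> K"
    then have k: "k \<in> carrier G" using K.subset by blast
    consider "k \<in> N" | "\<sigma> \<otimes> k \<in> N" using cover \<open>k \<in> K\<close> by blast
    then show "k \<in> {\<one>, \<sigma>} <#> N"
    proof cases
      case 1
      then show ?thesis unfolding set_mult_def using k by force
    next
      case 2
      then have "\<sigma> \<otimes> (\<sigma> \<otimes> k) \<in> {\<one>, \<sigma>} <#> N" unfolding set_mult_def by blast
      moreover have "\<sigma> \<otimes> (\<sigma> \<otimes> k) = k"
        using k \<open>\<sigma> \<in> K\<close> K.subset \<sigma>\<sigma> by (simp add: m_assoc[symmetric] subsetD)
      ultimately show ?thesis by simp
    qed
  qed
qed

lemma (in group) normal_of_involution_cover:
  assumes K: "subgroup K G" and N: "subgroup N G" and "N \<subseteq> K"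
    and "\<sigma> \<in> K" and "\<sigma> \<notin> N" and \<sigma>\<sigma>: "\<sigma> \<otimes> \<sigma> = \<one>"
    and cover: "\<forall>k\<in>K. k \<in> N \<or> \<sigma> \<otimes> k \<in> N"
  shows "normal N (G\<lparr>carrier := K\<rparr>)"
proof -
  interpret K: subgroup K G by (rule K)
  interpret N: subgroup N G by (rule N)
  interpret GK: group "G\<lparr>carrier := K\<rparr>" using subgroup_imp_group[OF K] .
  have \<sigma>: "\<sigma> \<in> carrier G" using \<open>\<sigma> \<in> K\<close> K.subset by blast
  have \<sigma>_conj: "\<sigma> \<otimes> n \<otimes> \<sigma> \<in> N" if n: "n \<in> N" for n
  proof (rule ccontr)
    assume "\<sigma> \<otimes> n \<otimes> \<sigma> \<notin> N"
    moreover have "\<sigma> \<otimes> n \<otimes> \<sigma> \<in> K" using \<open>\<sigma> \<in> K\<close> n \<open>N \<subseteq> K\<close> by blast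
    ultimately have "\<sigma> \<otimes> (\<sigma> \<otimes> n \<otimes> \<sigma>) \<in> N" using cover by blast
    then have "n \<otimes> \<sigma> \<in> N"
      using n \<sigma> \<sigma>\<sigma> by (simp add: m_assoc[symmetric])
    then have "inv n \<otimes> (n \<otimes> \<sigma>) \<in> N" using n by blast
    then show False using n \<sigma> \<open>\<sigma> \<notin> N\<close> by (simp add: m_assoc[symmetric])
  qed
  have "x \<otimes> h \<otimes> inv x \<in> N" if x: "x \<in> K" and h: "h \<in> N" for x h
  proof (cases "x \<in> N")
    case True
    then show ?thesis using h by blast
  next
    case False
    define m where "m = \<sigma> \<otimes> x"
    have m: "m \<in> N" unfolding m_def using cover x False by blast
    have x_eq: "x = \<sigma> \<otimes> m"
      unfolding m_def using x K.subset \<sigma> \<sigma>\<sigma> by (simp add: m_assoc[symmetric] subsetD)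
    have "\<sigma> \<otimes> m \<otimes> h \<otimes> inv (\<sigma> \<otimes> m) = \<sigma> \<otimes> (m \<otimes> h \<otimes> inv m) \<otimes> \<sigma>"
      using m h \<sigma> inv_equality[OF \<sigma>\<sigma> \<sigma> \<sigma>] N.subset by (simp add: inv_mult_group m_assoc subsetD)
    moreover have "\<sigma> \<otimes> (m \<otimes> h \<otimes> inv m) \<otimes> \<sigma> \<in> N" using \<sigma>_conj m h by blast
    ultimately show ?thesis by (simp only: x_eq)
  qed
  then show ?thesis
    using GK.normal_inv_iff subgroup_incl[OF N K \<open>N \<subseteq> K\<close>] m_inv_consistent[OF K] by auto
qed

lemma (in group) internal_semidirect_of_involution:
  assumes K: "subgroup K G" and N: "subgroup N G" and "N \<subseteq> K"
    and "\<sigma> \<in> K" and "\<sigma> \<notin> N" and \<sigma>\<sigma>: "\<sigma> \<otimes> \<sigma> = \<one>"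
    and cover: "\<forall>k\<in>K. k \<in> N \<or> \<sigma> \<otimes> k \<in> N"
  shows "internal_semidirect G K (generate G {\<sigma>}) N \<and> card (generate G {\<sigma>}) = 2"
proof -
  have \<sigma>: "\<sigma> \<in> carrier G" using \<open>\<sigma> \<in> K\<close> subgroup.subset[OF K] by blast
  have "\<sigma> \<noteq> \<one>" using \<open>\<sigma> \<notin> N\<close> subgroup.one_closed[OF N] by blast
  then show ?thesis
    unfolding internal_semidirect_def generate_involution[OF \<sigma> \<sigma>\<sigma>]
    using assms set_mult_involution_cover normal_of_involution_cover
      generate_is_subgroup[of "{\<sigma>}"] generate_involution[OF \<sigma> \<sigma>\<sigma>] subgroup.one_closed[OF N] \<sigma>
    by auto
qed

lemma (in group) involution_cover_transfer:
  assumes N: "subgroup N G" and "K \<subseteq> carrier G"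
    and \<sigma>: "\<sigma> \<in> carrier G" "\<sigma> \<otimes> \<sigma> = \<one>" and \<tau>: "\<tau> \<in> carrier G" "\<tau> \<otimes> \<tau> = \<one>"
    and "\<tau> \<in> K" and "\<tau> \<notin> N"
    and cover: "\<forall>k\<in>K. k \<in> N \<or> \<sigma> \<otimes> k \<in> N"
  shows "\<forall>k\<in>K. k \<in> N \<or> \<tau> \<otimes> k \<in> N"
proof
  interpret N: subgroup N G by (rule N)
  fix k assume "k \<in> K"
  show "k \<in> N \<or> \<tau> \<otimes> k \<in> N"
  proof (cases "k \<in> N")
    case False
    then have "\<sigma> \<otimes> k \<in> N" and k: "k \<in> carrier G"
      using cover \<open>k \<in> K\<close> \<open>K \<subseteq> carrier G\<close> by blast+
    moreover have "\<sigma> \<otimes> \<tau> \<in> N" using cover \<open>\<tau> \<in> K\<close> \<open>\<tau> \<notin> N\<close> by blast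
    ultimately have "inv (\<sigma> \<otimes> \<tau>) \<otimes> (\<sigma> \<otimes> k) \<in> N" by blast
    moreover have "inv (\<sigma> \<otimes> \<tau>) \<otimes> (\<sigma> \<otimes> k) = \<tau> \<otimes> k"
      using \<sigma> \<tau> k inv_equality[OF \<sigma>(2)] inv_equality[OF \<tau>(2)]
      by (simp add: inv_mult_group m_assoc[symmetric]) (simp add: m_assoc)
    ultimately show ?thesis by simp
  qed simp
qed

section \<open>Matrices and Lie automorphisms of sl2\<close>

lemma sl2_iff [simp]: "M2 p q r s \<in> sl2 \<longleftrightarrow> p + s = 0"
  by (simp add: sl2_def)

lemma sl2_cases:
  assumes "A \<in> sl2"
  obtains p q r where "A = M2 p q r (- p)"
  using assms by (cases A) (metis add.commute eq_neg_iff_add_eq_0 sl2_iff)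

lemma msmult_sl2 [simp]: "A \<in> sl2 \<Longrightarrow> msmult k A \<in> sl2"
  by (elim sl2_cases) simp

lemma madd_sl2 [simp]: "A \<in> sl2 \<Longrightarrow> B \<in> sl2 \<Longrightarrow> madd A B \<in> sl2"
  by (elim sl2_cases) simp

lemma br_sl2 [simp]: "br A B \<in> sl2"
  by (cases A; cases B) (simp add: br_def algebra_simps)

lemma mmul_assoc: "mmul (mmul A B) C = mmul A (mmul B C)"
  by (cases A; cases B; cases C) (simp add: algebra_simps)

lemma mmul_msub_left: "mmul (msub A B) C = msub (mmul A C) (mmul B C)"
  by (cases A; cases B; cases C) (simp add: algebra_simps)

lemma mmul_msub_right: "mmul C (msub A B) = msub (mmul C A) (mmul C B)"
  by (cases A; cases B; cases C) (simp add: algebra_simps)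

lemma mmul_one_left [simp]: "mmul (M2 1 0 0 1) A = A"
  by (cases A) simp

lemma mmul_one_right [simp]: "mmul A (M2 1 0 0 1) = A"
  by (cases A) simp

lemma lie_aut_Bij: "lie_aut \<phi> \<Longrightarrow> \<phi> \<in> Bij sl2"
  by (simp add: lie_aut_def)

lemma lie_aut_in_sl2: "lie_aut \<phi> \<Longrightarrow> A \<in> sl2 \<Longrightarrow> \<phi> A \<in> sl2"
  using lie_aut_Bij Bij_imp_funcset by fastforce

lemma lie_aut_inj: "lie_aut \<phi> \<Longrightarrow> inj_on \<phi> sl2"
  using lie_aut_Bij by (auto simp: Bij_def bij_betw_def)

lemma lie_aut_image: "lie_aut \<phi> \<Longrightarrow> \<phi> ` sl2 = sl2"
  using lie_aut_Bij by (auto simp: Bij_def bij_betw_def)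

lemma lie_aut_linear:
  "lie_aut \<phi> \<Longrightarrow> A \<in> sl2 \<Longrightarrow> B \<in> sl2 \<Longrightarrow> \<phi> (madd (msmult k A) B) = madd (msmult k (\<phi> A)) (\<phi> B)"
  by (simp add: lie_aut_def)

lemma lie_aut_br: "lie_aut \<phi> \<Longrightarrow> A \<in> sl2 \<Longrightarrow> B \<in> sl2 \<Longrightarrow> \<phi> (br A B) = br (\<phi> A) (\<phi> B)"
  by (simp add: lie_aut_def)

lemma lie_aut_zero: "lie_aut \<phi> \<Longrightarrow> \<phi> (M2 0 0 0 0) = M2 0 0 0 0"
  using lie_aut_linear[of \<phi> "M2 0 0 0 0" "M2 0 0 0 0" "-1"]
  by (cases "\<phi> (M2 0 0 0 0)") simp

lemma lie_aut_smult: "lie_aut \<phi> \<Longrightarrow> A \<in> sl2 \<Longrightarrow> \<phi> (msmult k A) = msmult k (\<phi> A)"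
  using lie_aut_linear[of \<phi> A "M2 0 0 0 0" k] lie_aut_zero[of \<phi>]
  by (cases A; cases "\<phi> A") simp

lemma lie_aut_add: "lie_aut \<phi> \<Longrightarrow> A \<in> sl2 \<Longrightarrow> B \<in> sl2 \<Longrightarrow> \<phi> (madd A B) = madd (\<phi> A) (\<phi> B)"
  using lie_aut_linear[of \<phi> A B 1] by (cases A; cases "\<phi> A") simp

lemma lie_aut_compose:
  assumes f: "lie_aut f" and g: "lie_aut g"
  shows "lie_aut (compose sl2 g f)"
  unfolding lie_aut_def
  using compose_Bij[OF lie_aut_Bij[OF g] lie_aut_Bij[OF f]] lie_aut_in_sl2[OF f]
  by (simp add: compose_def lie_aut_linear[OF f] lie_aut_linear[OF g]
      lie_aut_br[OF f] lie_aut_br[OF g])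

lemma lie_aut_inv:
  assumes f: "lie_aut f"
  shows "lie_aut (\<lambda>x\<in>sl2. inv_into sl2 f x)"
proof -
  have mem: "inv_into sl2 f A \<in> sl2" if "A \<in> sl2" for A
    using Bij_inv_into_mem[OF lie_aut_Bij[OF f] that] .
  have f_inv: "f (inv_into sl2 f A) = A" if "A \<in> sl2" for A
    using that lie_aut_image[OF f] by (metis f_inv_into_f)
  have inv_f: "inv_into sl2 f (f A) = A" if "A \<in> sl2" for A
    using inv_into_f_f[OF lie_aut_inj[OF f] that] .
  have "inv_into sl2 f (madd (msmult k A) B)
      = madd (msmult k (inv_into sl2 f A)) (inv_into sl2 f B)" if "A \<in> sl2" "B \<in> sl2" for k A B
    using that mem f_inv inv_f lie_aut_linear[OF f] by (metis msmult_sl2 madd_sl2)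
  moreover have "inv_into sl2 f (br A B) = br (inv_into sl2 f A) (inv_into sl2 f B)"
    if "A \<in> sl2" "B \<in> sl2" for A B
    using that mem f_inv inv_f lie_aut_br[OF f] by (metis br_sl2)
  ultimately show ?thesis
    unfolding lie_aut_def using restrict_inv_into_Bij[OF lie_aut_Bij[OF f]] by simp
qed

section \<open>The lattice L\<close>

definition lat :: "int \<Rightarrow> int \<Rightarrow> int \<Rightarrow> 'a::field_char_0 m2" where
  "lat p q r = M2 (of_int p) (2 * of_int q) (2 * of_int r) (- of_int p)"

lemma Lat_iff: "A \<in> Lat \<longleftrightarrow> (\<exists>p q r. A = lat p q r)"
proof
  assume "A \<in> Lat"
  then obtain a b c :: int
    where "A = madd (msmult (of_int a) ex) (madd (msmult (of_int b) ey) (msmult (of_int c) ez))"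
    unfolding Lat_def by auto
  then have "A = lat (a - b - c) b (- c)"
    by (simp add: lat_def ex_def ey_def ez_def algebra_simps)
  then show "\<exists>p q r. A = lat p q r" by blast
next
  assume "\<exists>p q r. A = lat p q r"
  then obtain p q r where "A = lat p q r" by blast
  then have "A = madd (msmult (of_int (p + q - r)) ex)
      (madd (msmult (of_int q) ey) (msmult (of_int (- r)) ez))"
    by (simp add: lat_def ex_def ey_def ez_def algebra_simps)
  then show "A \<in> Lat" unfolding Lat_def by blast
qed

lemma lat_in_sl2 [simp]: "lat p q r \<in> sl2"
  by (simp add: lat_def)

lemma lat_in_Lat [simp]: "lat p q r \<in> Lat"
  by (auto simp: Lat_iff)

lemma Lat_cases:
  assumes "A \<in> Lat"
  obtains p q r where "A = lat p q r"
  using assms by (auto simp: Lat_iff)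

lemma Lat_subset_sl2: "Lat \<subseteq> sl2"
  by (auto simp: Lat_iff)

lemma lat_eq_iff [simp]:
  "(lat p q r :: 'a::field_char_0 m2) = lat p' q' r' \<longleftrightarrow> p = p' \<and> q = q' \<and> r = r'"
  by (auto simp: lat_def)

definition lat_h :: "'a::field_char_0 m2" where "lat_h = lat 1 0 0"
definition lat_e :: "'a::field_char_0 m2" where "lat_e = lat 0 1 0"
definition lat_f :: "'a::field_char_0 m2" where "lat_f = lat 0 0 1"

lemma lat_h_in_Lat: "lat_h \<in> Lat"
  by (simp add: lat_h_def)

lemma lat_e_in_Lat: "lat_e \<in> Lat"
  by (simp add: lat_e_def)

lemma lat_hef_in_sl2 [simp]: "lat_h \<in> sl2" "lat_e \<in> sl2" "lat_f \<in> sl2"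
  by (simp_all add: lat_h_def lat_e_def lat_f_def)

lemma br_lat_hef:
  "br lat_h lat_e = msmult 2 lat_e"
  "br lat_h lat_f = msmult (-2) lat_f"
  "br lat_e lat_f = msmult 4 lat_h"
  by (simp_all add: br_def lat_h_def lat_e_def lat_f_def lat_def)

lemma sl2_span_lat_hef:
  "M2 p q r (- p) = madd (msmult p lat_h) (madd (msmult (q / 2) lat_e) (msmult (r / 2) lat_f))"
  by (simp add: lat_h_def lat_e_def lat_f_def lat_def)

lemma lie_aut_fixing_lat_h_e:
  assumes \<phi>: "lie_aut \<phi>" and h: "\<phi> lat_h = lat_h" and e: "\<phi> lat_e = lat_e"
  shows "\<phi> = (\<lambda>A\<in>sl2. A)"
proof -
  obtain p q r where f: "\<phi> lat_f = M2 p q r (- p)"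
    using lie_aut_in_sl2[OF \<phi> lat_hef_in_sl2(3)] by (rule sl2_cases)
  have "br lat_h (\<phi> lat_f) = msmult (-2) (\<phi> lat_f)" "br lat_e (\<phi> lat_f) = msmult 4 lat_h"
    using lie_aut_br[OF \<phi>, of lat_h lat_f] lie_aut_br[OF \<phi>, of lat_e lat_f]
      lie_aut_smult[OF \<phi>, of lat_f] lie_aut_smult[OF \<phi>, of lat_h] h e
    by (simp_all add: br_lat_hef)
  then have "\<phi> lat_f = lat_f"
    unfolding f by (simp add: br_def lat_h_def lat_e_def lat_f_def lat_def)
  show ?thesis
  proof
    fix A
    show "\<phi> A = (\<lambda>A\<in>sl2. A) A"
    proof (cases "A \<in> sl2")
      case True
      then obtain p q r where "A = M2 p q r (- p)" by (rule sl2_cases)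
      then show ?thesis
        using True \<phi> h e \<open>\<phi> lat_f = lat_f\<close> by (simp add: sl2_span_lat_hef lie_aut_add lie_aut_smult)
    next
      case False
      then show ?thesis
        using Bij_imp_extensional[OF lie_aut_Bij[OF \<phi>]] by (simp add: extensional_def)
    qed
  qed
qed

section \<open>Conjugation by SL2(Z) and the group G\<close>

definition imat :: "int \<Rightarrow> int \<Rightarrow> int \<Rightarrow> int \<Rightarrow> 'a::field_char_0 m2" where
  "imat a b c d = M2 (of_int a) (of_int b) (of_int c) (of_int d)"

text \<open>\<open>imat d (- b) (- c) a\<close> is the adjugate of \<open>imat a b c d\<close>, so for \<open>a d - b c = 1\<close> the
  map \<open>conj_SL2 a b c d\<close> is conjugation by an element of SL2(Z).\<close>
definition conj_SL2 :: "int \<Rightarrow> int \<Rightarrow> int \<Rightarrow> int \<Rightarrow> 'a::field_char_0 m2 \<Rightarrow> 'a m2" where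
  "conj_SL2 a b c d = (\<lambda>A\<in>sl2. mmul (mmul (imat a b c d) A) (imat d (- b) (- c) a))"

lemma conj_SL2_apply:
  "A \<in> sl2 \<Longrightarrow> conj_SL2 a b c d A = mmul (mmul (imat a b c d) A) (imat d (- b) (- c) a)"
  by (simp add: conj_SL2_def)

lemma conj_SL2_in_sl2 [simp]: "A \<in> sl2 \<Longrightarrow> conj_SL2 a b c d A \<in> sl2"
  by (elim sl2_cases) (simp add: conj_SL2_def imat_def algebra_simps)

lemma conj_SL2_lat:
  "conj_SL2 a b c d (lat p q r) =
     lat (a * d * p + b * c * p + 2 * b * d * r - 2 * a * c * q)
       (a * a * q - a * b * p - b * b * r) (c * d * p + d * d * r - c * c * q)"
  by (simp add: conj_SL2_apply lat_def imat_def algebra_simps)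

lemma imat_mult:
  "mmul (imat a b c d) (imat a' b' c' d') =
     imat (a * a' + b * c') (a * b' + b * d') (c * a' + d * c') (c * b' + d * d')"
  by (simp add: imat_def)

lemma conj_SL2_compose:
  "compose sl2 (conj_SL2 a b c d) (conj_SL2 a' b' c' d') =
     conj_SL2 (a * a' + b * c') (a * b' + b * d') (c * a' + d * c') (c * b' + d * d')"
proof
  fix A :: "'a m2"
  let ?g = "imat a b c d :: 'a m2" and ?g' = "imat a' b' c' d' :: 'a m2"
  let ?h = "imat d (- b) (- c) a :: 'a m2" and ?h' = "imat d' (- b') (- c') a' :: 'a m2"
  show "compose sl2 (conj_SL2 a b c d) (conj_SL2 a' b' c' d') A =
      conj_SL2 (a * a' + b * c') (a * b' + b * d') (c * a' + d * c') (c * b' + d * d') A"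
  proof (cases "A \<in> sl2")
    case True
    then have "compose sl2 (conj_SL2 a b c d) (conj_SL2 a' b' c' d') A
        = mmul (mmul ?g (conj_SL2 a' b' c' d' A)) ?h"
      by (simp add: compose_def conj_SL2_apply[OF conj_SL2_in_sl2])
    also have "\<dots> = mmul (mmul ?g (mmul (mmul ?g' A) ?h')) ?h"
      using True by (simp add: conj_SL2_apply)
    also have "\<dots> = mmul (mmul (mmul ?g ?g') A) (mmul ?h' ?h)"
      by (simp add: mmul_assoc)
    also have "\<dots> =
        conj_SL2 (a * a' + b * c') (a * b' + b * d') (c * a' + d * c') (c * b' + d * d') A"
      using True by (simp add: conj_SL2_apply imat_mult algebra_simps)
    finally show ?thesis .
  qed (simp add: compose_def conj_SL2_def)
qed

lemma conj_SL2_one: "conj_SL2 1 0 0 1 = (\<lambda>A\<in>sl2. A)"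
  by (simp add: conj_SL2_def imat_def)

lemma conj_SL2_adj_cancel:
  assumes "a * d - b * c = 1" and "A \<in> sl2"
  shows "conj_SL2 a b c d (conj_SL2 d (- b) (- c) a A) = A"
    and "conj_SL2 d (- b) (- c) a (conj_SL2 a b c d A) = A"
proof -
  have "compose sl2 (conj_SL2 a b c d) (conj_SL2 d (- b) (- c) a) = conj_SL2 1 0 0 1"
    and "compose sl2 (conj_SL2 d (- b) (- c) a) (conj_SL2 a b c d) = conj_SL2 1 0 0 1"
    using assms(1) by (simp_all add: conj_SL2_compose algebra_simps)
  from this[THEN fun_cong, of A] assms(2)
  show "conj_SL2 a b c d (conj_SL2 d (- b) (- c) a A) = A"
    and "conj_SL2 d (- b) (- c) a (conj_SL2 a b c d A) = A"
    by (simp_all add: conj_SL2_one compose_def)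
qed

lemma conj_SL2_Bij:
  assumes det: "a * d - b * c = 1"
  shows "conj_SL2 a b c d \<in> Bij sl2"
proof -
  have "bij_betw (conj_SL2 a b c d) sl2 sl2"
    by (rule bij_betw_byWitness[where f' = "conj_SL2 d (- b) (- c) a"])
      (auto simp: conj_SL2_adj_cancel[OF det])
  then show ?thesis by (simp add: Bij_def conj_SL2_def)
qed

lemma conj_SL2_lie_aut:
  assumes det: "a * d - b * c = 1"
  shows "lie_aut (conj_SL2 a b c d)"
  unfolding lie_aut_def
proof (intro conjI allI ballI)
  show "conj_SL2 a b c d \<in> Bij sl2" using conj_SL2_Bij[OF det] .
next
  fix k :: 'a and A B :: "'a m2" assume "A \<in> sl2" "B \<in> sl2"
  then show "conj_SL2 a b c d (madd (msmult k A) B) =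
      madd (msmult k (conj_SL2 a b c d A)) (conj_SL2 a b c d B)"
    by (simp add: conj_SL2_apply) (auto elim!: sl2_cases simp: imat_def algebra_simps)
next
  fix A B :: "'a m2" assume "A \<in> sl2" "B \<in> sl2"
  let ?g = "imat a b c d :: 'a m2" and ?h = "imat d (- b) (- c) a :: 'a m2"
  have hg: "mmul ?h ?g = M2 1 0 0 1"
    using arg_cong[OF det, of "of_int :: int \<Rightarrow> 'a"] by (simp add: imat_def algebra_simps)
  have "br (mmul (mmul ?g A) ?h) (mmul (mmul ?g B) ?h) =
      msub (mmul ?g (mmul A (mmul (mmul ?h ?g) (mmul B ?h))))
        (mmul ?g (mmul B (mmul (mmul ?h ?g) (mmul A ?h))))"
    by (simp add: br_def mmul_assoc)
  also have "\<dots> = mmul (mmul ?g (br A B)) ?h"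
    by (simp add: hg br_def mmul_msub_left mmul_msub_right mmul_assoc)
  finally show "conj_SL2 a b c d (br A B) = br (conj_SL2 a b c d A) (conj_SL2 a b c d B)"
    using \<open>A \<in> sl2\<close> \<open>B \<in> sl2\<close> by (simp add: conj_SL2_apply)
qed

lemma conj_SL2_AutZ:
  assumes det: "a * d - b * c = 1"
  shows "conj_SL2 a b c d \<in> AutZ"
proof -
  have into: "conj_SL2 a' b' c' d' A \<in> Lat" if "A \<in> Lat" for a' b' c' d' and A :: "'a m2"
    using that by (auto simp: Lat_iff conj_SL2_lat)
  have "A \<in> conj_SL2 a b c d ` Lat" if "A \<in> Lat" for A :: "'a m2"
    using that into Lat_subset_sl2 conj_SL2_adj_cancel(1)[OF det, of A, symmetric] by blast
  then show ?thesis unfolding AutZ_def using conj_SL2_lie_aut[OF det] into by auto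
qed

abbreviation BijSL2 :: "('a::field_char_0 m2 \<Rightarrow> 'a m2) monoid" where
  "BijSL2 \<equiv> BijGroup sl2"

lemma group_BijSL2: "group BijSL2"
  by (rule group_BijGroup)

lemma BijSL2_carrier [simp]: "carrier BijSL2 = Bij sl2"
  by (simp add: BijGroup_def)

lemma BijSL2_one: "\<one>\<^bsub>BijSL2\<^esub> = (\<lambda>A\<in>sl2. A)"
  by (simp add: BijGroup_def)

lemma BijSL2_mult: "f \<in> Bij sl2 \<Longrightarrow> g \<in> Bij sl2 \<Longrightarrow> f \<otimes>\<^bsub>BijSL2\<^esub> g = compose sl2 f g"
  by (simp add: BijGroup_def)

lemma BijSL2_mult_apply: "f \<in> Bij sl2 \<Longrightarrow> g \<in> Bij sl2 \<Longrightarrow> A \<in> sl2 \<Longrightarrow> (f \<otimes>\<^bsub>BijSL2\<^esub> g) A = f (g A)"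
  by (simp add: BijSL2_mult compose_def)

lemma conj_SL2_mult:
  assumes "a * d - b * c = 1" and "a' * d' - b' * c' = 1"
  shows "conj_SL2 a b c d \<otimes>\<^bsub>BijSL2\<^esub> conj_SL2 a' b' c' d' =
    conj_SL2 (a * a' + b * c') (a * b' + b * d') (c * a' + d * c') (c * b' + d * d')"
  using assms by (simp add: BijSL2_mult conj_SL2_Bij conj_SL2_compose)

lemma conj_SL2_inv:
  assumes det: "a * d - b * c = 1"
  shows "inv\<^bsub>BijSL2\<^esub> conj_SL2 a b c d = conj_SL2 d (- b) (- c) a"
proof (rule group.inv_equality[OF group_BijSL2])
  have det': "d * a - (- b) * (- c) = 1" using det by (simp add: algebra_simps)
  show "conj_SL2 d (- b) (- c) a \<otimes>\<^bsub>BijSL2\<^esub> conj_SL2 a b c d = \<one>\<^bsub>BijSL2\<^esub>"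
    using det by (simp add: conj_SL2_mult[OF det' det] BijSL2_one algebra_simps flip: conj_SL2_one)
  show "conj_SL2 a b c d \<in> carrier BijSL2" "conj_SL2 d (- b) (- c) a \<in> carrier BijSL2"
    using conj_SL2_Bij[OF det] conj_SL2_Bij[OF det'] by simp_all
qed

lemma AutZ_subgroup: "subgroup AutZ BijSL2"
proof (rule group.subgroupI[OF group_BijSL2])
  show "AutZ \<subseteq> carrier BijSL2"
    by (auto simp: AutZ_def lie_aut_Bij)
  show "AutZ \<noteq> {}"
    using conj_SL2_AutZ[where a = 1 and b = 0 and c = 0 and d = 1] by auto
next
  fix f assume "f \<in> AutZ"
  then have f: "lie_aut f" and fLat: "f ` Lat = Lat" by (auto simp: AutZ_def)
  have "(\<lambda>A\<in>sl2. inv_into sl2 f A) (f z) = z" if "z \<in> Lat" for z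
    using that Lat_subset_sl2 lie_aut_in_sl2[OF f] inv_into_f_f[OF lie_aut_inj[OF f]] by auto
  then have "(\<lambda>A\<in>sl2. inv_into sl2 f A) ` f ` Lat = Lat"
    unfolding image_image by simp
  then have "(\<lambda>A\<in>sl2. inv_into sl2 f A) ` Lat = Lat"
    by (simp only: fLat)
  then show "inv\<^bsub>BijSL2\<^esub> f \<in> AutZ"
    unfolding inv_BijGroup[OF lie_aut_Bij[OF f]] AutZ_def using lie_aut_inv[OF f] by simp
next
  fix f g :: "'a m2 \<Rightarrow> 'a m2" assume "f \<in> AutZ" "g \<in> AutZ"
  then have "lie_aut f" "lie_aut g" "f ` Lat = Lat" "g ` Lat = Lat" by (auto simp: AutZ_def)
  moreover have "compose sl2 f g ` Lat = f ` g ` Lat"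
    using Lat_subset_sl2 by (force simp: compose_def)
  ultimately show "f \<otimes>\<^bsub>BijSL2\<^esub> g \<in> AutZ"
    by (simp add: AutZ_def BijSL2_mult lie_aut_Bij lie_aut_compose)
qed

lemma AutZ_lie_aut: "\<chi> \<in> AutZ \<Longrightarrow> lie_aut \<chi>"
  by (simp add: AutZ_def)

lemma AutZ_Lat: "\<chi> \<in> AutZ \<Longrightarrow> A \<in> Lat \<Longrightarrow> \<chi> A \<in> Lat"
  by (auto simp: AutZ_def)

lemma AutZ_Bij: "\<chi> \<in> AutZ \<Longrightarrow> \<chi> \<in> Bij sl2"
  by (simp add: AutZ_def lie_aut_Bij)

lemma AutZ_mult_apply:
  "f \<in> AutZ \<Longrightarrow> g \<in> AutZ \<Longrightarrow> A \<in> sl2 \<Longrightarrow> (f \<otimes>\<^bsub>BijSL2\<^esub> g) A = f (g A)"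
  by (simp add: AutZ_Bij BijSL2_mult_apply)

definition SL2Z_conj :: "('a::field_char_0 m2 \<Rightarrow> 'a m2) set" where
  "SL2Z_conj = {conj_SL2 a b c d | a b c d. a * d - b * c = 1}"

lemma conj_SL2_in_SL2Z_conj: "a * d - b * c = 1 \<Longrightarrow> conj_SL2 a b c d \<in> SL2Z_conj"
  by (auto simp: SL2Z_conj_def)

lemma SL2Z_conj_subset_AutZ: "SL2Z_conj \<subseteq> AutZ"
  unfolding SL2Z_conj_def using conj_SL2_AutZ by blast

lemma exp_ad_generators:
  "exp_ad xs = conj_SL2 2 (- 1) 1 0"
  "exp_ad ys = conj_SL2 1 0 1 1"
  "exp_ad zs = conj_SL2 1 (- 1) 0 1"
  by (rule ext, rename_tac A, case_tac A,
      simp add: exp_ad_def conj_SL2_def imat_def xs_def ys_def zs_def br_def field_simps)+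

lemma generators_in_SL2Z_conj: "{exp_ad xs, exp_ad ys, exp_ad zs} \<subseteq> SL2Z_conj"
  by (simp add: exp_ad_generators conj_SL2_in_SL2Z_conj)

lemma Ggrp_subset_SL2Z_conj: "Ggrp \<subseteq> SL2Z_conj"
proof
  fix f assume "f \<in> Ggrp"
  then show "f \<in> SL2Z_conj"
    unfolding Ggrp_def
  proof (induction rule: generate.induct)
    case one
    show ?case
      unfolding BijSL2_one conj_SL2_one[symmetric] by (simp add: conj_SL2_in_SL2Z_conj)
  next
    case (incl h)
    then show ?case using generators_in_SL2Z_conj by blast
  next
    case (inv h)
    then obtain a b c d where "h = conj_SL2 a b c d" "a * d - b * c = 1"
      using generators_in_SL2Z_conj by (auto simp: SL2Z_conj_def)
    moreover have "d * a - (- b) * (- c) = 1" using calculation(2) by (simp add: algebra_simps)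
    ultimately show ?case by (simp add: conj_SL2_in_SL2Z_conj conj_SL2_inv)
  next
    case (eng h h')
    then obtain a b c d a' b' c' d' where
      "h = conj_SL2 a b c d" "a * d - b * c = 1" "h' = conj_SL2 a' b' c' d'" "a' * d' - b' * c' = 1"
      by (auto simp: SL2Z_conj_def)
    moreover have "(a * a' + b * c') * (c * b' + d * d') - (a * b' + b * d') * (c * a' + d * c')
        = (a * d - b * c) * (a' * d' - b' * c')"
      by (simp add: algebra_simps)
    ultimately show ?case by (simp add: conj_SL2_in_SL2Z_conj conj_SL2_mult)
  qed
qed

lemma Ggrp_subset_AutZ: "Ggrp \<subseteq> AutZ"
  using Ggrp_subset_SL2Z_conj SL2Z_conj_subset_AutZ by blast

lemma Ggrp_subgroup: "subgroup Ggrp BijSL2"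
  unfolding Ggrp_def
  using generators_in_SL2Z_conj SL2Z_conj_subset_AutZ AutZ_subgroup[THEN subgroup.subset]
  by (intro group.generate_is_subgroup[OF group_BijSL2]) blast

lemma Ggrp_generators: "exp_ad ys \<in> Ggrp" "exp_ad zs \<in> Ggrp"
  unfolding Ggrp_def by (auto intro: generate.incl)

lemma conj_SL2_upper_in_Ggrp: "conj_SL2 1 n 0 1 \<in> Ggrp"
proof (induction n rule: int_induct[where k = 0])
  case base
  show ?case
    unfolding conj_SL2_one BijSL2_one[symmetric] by (rule subgroup.one_closed[OF Ggrp_subgroup])
next
  case (step1 n)
  from subgroup.m_closed[OF Ggrp_subgroup
      subgroup.m_inv_closed[OF Ggrp_subgroup Ggrp_generators(2)] step1.IH]
  show ?case by (simp add: exp_ad_generators conj_SL2_inv conj_SL2_mult add.commute)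
next
  case (step2 n)
  from subgroup.m_closed[OF Ggrp_subgroup Ggrp_generators(2) step2.IH]
  show ?case by (simp add: exp_ad_generators conj_SL2_mult)
qed

lemma conj_SL2_lower_in_Ggrp: "conj_SL2 1 0 n 1 \<in> Ggrp"
proof (induction n rule: int_induct[where k = 0])
  case base
  show ?case
    unfolding conj_SL2_one BijSL2_one[symmetric] by (rule subgroup.one_closed[OF Ggrp_subgroup])
next
  case (step1 n)
  from subgroup.m_closed[OF Ggrp_subgroup Ggrp_generators(1) step1.IH]
  show ?case by (simp add: exp_ad_generators conj_SL2_mult add.commute)
next
  case (step2 n)
  from subgroup.m_closed[OF Ggrp_subgroup
      subgroup.m_inv_closed[OF Ggrp_subgroup Ggrp_generators(1)] step2.IH]
  show ?case by (simp add: exp_ad_generators conj_SL2_inv conj_SL2_mult)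
qed

section \<open>The involutions -(u v)\<close>

lemma coords_linear:
  "cx (madd (msmult k A) B) = k * cx A + cx B"
  "cy (madd (msmult k A) B) = k * cy A + cy B"
  "cz (madd (msmult k A) B) = k * cz A + cz B"
  by (cases A; cases B; simp add: field_simps)+

lemma lin_map_linear:
  assumes "A \<in> sl2" and "B \<in> sl2"
  shows "lin_map u v w (madd (msmult k A) B) = madd (msmult k (lin_map u v w A)) (lin_map u v w B)"
proof -
  have "madd (msmult (k * a + a') u) (madd (msmult (k * b + b') v) (msmult (k * c + c') w)) =
      madd (msmult k (madd (msmult a u) (madd (msmult b v) (msmult c w))))
        (madd (msmult a' u) (madd (msmult b' v) (msmult c' w)))" for a b c a' b' c'
    by (cases u; cases v; cases w) (simp add: algebra_simps)
  then show ?thesis using assms by (simp add: lin_map_def coords_linear)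
qed

lemma lin_map_involution_AutZ:
  fixes f :: "'a::field_char_0 m2 \<Rightarrow> 'a m2"
  assumes f: "f = lin_map u v w"
    and sl2: "\<And>A. A \<in> sl2 \<Longrightarrow> f A \<in> sl2"
    and inv: "\<And>A. A \<in> sl2 \<Longrightarrow> f (f A) = A"
    and br: "\<And>A B. A \<in> sl2 \<Longrightarrow> B \<in> sl2 \<Longrightarrow> f (br A B) = br (f A) (f B)"
    and Lat: "\<And>A. A \<in> Lat \<Longrightarrow> f A \<in> Lat"
  shows "f \<in> AutZ" and "f \<otimes>\<^bsub>BijSL2\<^esub> f = \<one>\<^bsub>BijSL2\<^esub>"
proof -
  have "bij_betw f sl2 sl2"
    by (rule bij_betw_byWitness[where f' = f]) (use inv sl2 in auto)
  then have Bij: "f \<in> Bij sl2" by (simp add: Bij_def f lin_map_def)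
  have "A \<in> f ` Lat" if "A \<in> Lat" for A
    using that Lat Lat_subset_sl2 inv[of A, symmetric] by blast
  then show "f \<in> AutZ"
    unfolding AutZ_def lie_aut_def using Bij br Lat by (auto simp: f lin_map_linear)
  have "compose sl2 f f = (\<lambda>A\<in>sl2. A)"
    by (rule ext) (simp add: compose_def inv)
  then show "f \<otimes>\<^bsub>BijSL2\<^esub> f = \<one>\<^bsub>BijSL2\<^esub>"
    by (simp add: BijSL2_mult[OF Bij Bij] BijSL2_one)
qed

lemma neg_swap_apply:
  assumes "p + s = 0"
  shows "neg_swap_xy (M2 p q r s) = M2 (p - r) (r - q - 2 * p) (- r) (r - p)"
    and "neg_swap_yz (M2 p q r s) = M2 (- p) r q p"
    and "neg_swap_zx (M2 p q r s) = M2 (p + q) (- q) (2 * p + q - r) (- (p + q))"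
  using assms
  by (simp_all add: neg_swap_xy_def neg_swap_yz_def neg_swap_zx_def lin_map_def ex_def ey_def ez_def
      field_simps eq_neg_iff_add_eq_0[symmetric] add_eq_0_iff2)

lemma neg_swap_lat:
  "neg_swap_xy (lat p q r) = lat (p - 2 * r) (r - p - q) (- r)"
  "neg_swap_yz (lat p q r) = lat (- p) r q"
  "neg_swap_zx (lat p q r) = lat (p + 2 * q) (- q) (p + q - r)"
  by (simp_all add: lat_def neg_swap_apply algebra_simps)

lemma neg_swap_xy_AutZ:
  "neg_swap_xy \<in> AutZ \<and> neg_swap_xy \<otimes>\<^bsub>BijSL2\<^esub> neg_swap_xy = \<one>\<^bsub>BijSL2\<^esub>"
  by (intro conjI lin_map_involution_AutZ[OF neg_swap_xy_def])
    (auto elim!: sl2_cases Lat_cases simp: neg_swap_apply neg_swap_lat br_def algebra_simps)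

lemma neg_swap_yz_AutZ:
  "neg_swap_yz \<in> AutZ \<and> neg_swap_yz \<otimes>\<^bsub>BijSL2\<^esub> neg_swap_yz = \<one>\<^bsub>BijSL2\<^esub>"
  by (intro conjI lin_map_involution_AutZ[OF neg_swap_yz_def])
    (auto elim!: sl2_cases Lat_cases simp: neg_swap_apply neg_swap_lat br_def algebra_simps)

lemma neg_swap_zx_AutZ:
  "neg_swap_zx \<in> AutZ \<and> neg_swap_zx \<otimes>\<^bsub>BijSL2\<^esub> neg_swap_zx = \<one>\<^bsub>BijSL2\<^esub>"
  by (intro conjI lin_map_involution_AutZ[OF neg_swap_zx_def])
    (auto elim!: sl2_cases Lat_cases simp: neg_swap_apply neg_swap_lat br_def algebra_simps)

lemma SL2Z_conj_lat_e_sign: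
  assumes "f \<in> SL2Z_conj" and "f lat_e = lat p q r"
  shows "0 \<le> q \<and> r \<le> 0"
proof -
  obtain a b c d where "f = conj_SL2 a b c d" using assms(1) by (auto simp: SL2Z_conj_def)
  then have "q = a * a" "r = - (c * c)" using assms(2) by (simp_all add: lat_e_def conj_SL2_lat)
  then show ?thesis by simp
qed

lemma neg_swap_not_in_Ggrp: "neg_swap_xy \<notin> Ggrp" "neg_swap_yz \<notin> Ggrp" "neg_swap_zx \<notin> Ggrp"
  using SL2Z_conj_lat_e_sign Ggrp_subset_SL2Z_conj by (fastforce simp: lat_e_def neg_swap_lat)+

section \<open>Reduction of an integral automorphism into G\<close>

lemma AutZ_br_lat_h_e: "\<chi> \<in> AutZ \<Longrightarrow> br (\<chi> lat_h) (\<chi> lat_e) = msmult 2 (\<chi> lat_e)"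
  using lie_aut_br[of \<chi> lat_h lat_e] lie_aut_smult[of \<chi> lat_e 2]
  by (simp add: AutZ_lie_aut br_lat_hef)

lemma ad_eigenvector_nilpotent:
  fixes x y z :: "'a::field_char_0"
  assumes "H \<in> sl2" and "br H (M2 x y z (- x)) = msmult 2 (M2 x y z (- x))"
  shows "x * x + y * z = 0"
proof -
  obtain a b c where "H = M2 a b c (- a)" using assms(1) by (rule sl2_cases)
  then have "br H (M2 x y z (- x)) =
      M2 (b * z - c * y) (2 * (a * y - b * x)) (2 * (c * x - a * z)) (c * y - b * z)"
    by (simp add: br_def algebra_simps)
  then have eqs: "b * z - c * y = 2 * x" "2 * (a * y - b * x) = 2 * y" "2 * (c * x - a * z) = 2 * z"
    using assms(2) by simp_all
  have "2 * x * (b * z - c * y) + z * (2 * (a * y - b * x)) + y * (2 * (c * x - a * z)) = 0"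
    by (simp add: algebra_simps)
  then have "4 * (x * x + y * z) = 0"
    unfolding eqs by (simp add: algebra_simps)
  then show ?thesis by (simp only: mult_eq_0_iff) simp
qed

lemma AutZ_lat_e_nilpotent:
  assumes "\<chi> \<in> AutZ" and e: "\<chi> lat_e = lat p q r"
  shows "p * p + 4 * q * r = 0"
proof -
  have "of_int p * of_int p + 2 * of_int q * (2 * of_int r) = (0 :: 'a)"
    using AutZ_br_lat_h_e[OF assms(1)] e
    by (intro ad_eigenvector_nilpotent[OF lie_aut_in_sl2[OF AutZ_lie_aut[OF assms(1)]]])
      (simp_all add: lat_def)
  then have "of_int (p * p + 4 * q * r) = (0 :: 'a)" by (simp add: algebra_simps)
  then show ?thesis by (simp only: of_int_eq_0_iff)
qed

lemma AutZ_lat_e: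
  assumes "\<chi> \<in> AutZ"
  obtains s q r where "\<chi> lat_e = lat (2 * s) q r"
proof -
  obtain p q r where e: "\<chi> lat_e = lat p q r"
    using AutZ_Lat[OF assms lat_e_in_Lat] by (rule Lat_cases)
  then have "p * p = 2 * (- 2 * q * r)" using AutZ_lat_e_nilpotent[OF assms] by simp
  then have "even p" by (metis dvd_triv_left even_mult_iff)
  then obtain s where "p = 2 * s" by blast
  with e show ?thesis using that by simp
qed

lemma AutZ_lat_e_unimodular:
  assumes \<chi>: "\<chi> \<in> AutZ" and e: "\<chi> lat_e = lat 0 q 0"
  shows "q = 1 \<or> q = -1"
proof -
  have "lat_e \<in> \<chi> ` Lat" using \<chi> lat_e_in_Lat by (simp add: AutZ_def)
  then obtain A where A: "A \<in> Lat" "\<chi> A = lat_e" by (metis imageE)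
  obtain p' q' r' where A': "A = lat p' q' r'" using A(1) by (rule Lat_cases)
  have "\<chi> (msmult (of_int q) A) = \<chi> lat_e"
    using lie_aut_smult[OF AutZ_lie_aut[OF \<chi>]] A e Lat_subset_sl2
    by (auto simp: lat_e_def lat_def)
  then have "msmult (of_int q) A = lat_e"
    by (rule inj_onD[OF lie_aut_inj[OF AutZ_lie_aut[OF \<chi>]]]) (use A(1) Lat_subset_sl2 in auto)
  then have "(of_int (q * q') :: 'a) = of_int 1" by (simp add: A' lat_e_def lat_def)
  then have "q * q' = 1" by (simp only: of_int_eq_iff)
  then show ?thesis by (auto simp: zmult_eq_1_iff)
qed

lemma AutZ_fixing_lat_e_in_Ggrp:
  assumes \<chi>: "\<chi> \<in> AutZ" and e: "\<chi> lat_e = lat_e"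
  shows "\<chi> \<in> Ggrp"
proof -
  interpret BijSL2: group "BijSL2 :: ('a m2 \<Rightarrow> 'a m2) monoid" by (rule group_BijSL2)
  obtain a b d where h: "\<chi> lat_h = lat a b d"
    using AutZ_Lat[OF \<chi> lat_h_in_Lat] by (rule Lat_cases)
  have "br (lat a b d) lat_e = msmult 2 (lat_e :: 'a m2)"
    using AutZ_br_lat_h_e[OF \<chi>] e h by simp
  then have "a = 1" "d = 0"
    by (simp_all add: br_def lat_e_def lat_def)
  let ?u = "conj_SL2 1 b 0 1 :: 'a m2 \<Rightarrow> 'a m2"
  have u_AutZ: "?u \<in> AutZ" by (rule conj_SL2_AutZ) simp
  have "lie_aut (?u \<otimes>\<^bsub>BijSL2\<^esub> \<chi>)"
    using subgroup.m_closed[OF AutZ_subgroup u_AutZ \<chi>] by (rule AutZ_lie_aut)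
  moreover have "(?u \<otimes>\<^bsub>BijSL2\<^esub> \<chi>) lat_h = lat_h" "(?u \<otimes>\<^bsub>BijSL2\<^esub> \<chi>) lat_e = lat_e"
    using BijSL2_mult_apply[OF AutZ_Bij[OF u_AutZ] AutZ_Bij[OF \<chi>]] h e \<open>a = 1\<close> \<open>d = 0\<close>
    by (simp_all add: lat_h_def lat_e_def conj_SL2_lat)
  ultimately have "?u \<otimes>\<^bsub>BijSL2\<^esub> \<chi> = \<one>\<^bsub>BijSL2\<^esub>"
    unfolding BijSL2_one by (rule lie_aut_fixing_lat_h_e)
  then have "?u \<otimes>\<^bsub>BijSL2\<^esub> \<chi> \<in> Ggrp"
    using subgroup.one_closed[OF Ggrp_subgroup] by simp
  then show ?thesis
    using BijSL2.subgroup_mult_cancel_left[OF Ggrp_subgroup conj_SL2_upper_in_Ggrp] AutZ_Bij[OF \<chi>]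
    by simp
qed

lemma int_descent_step:
  fixes s q r :: int
  assumes ssq: "s * s = - (q * r)" and "q \<noteq> 0" and "\<bar>q\<bar> \<le> \<bar>r\<bar>"
  obtains t where "t = 1 \<or> t = -1" and "\<bar>r + 2 * t * s - q\<bar> < \<bar>r\<bar>"
proof -
  have abs_ssq: "\<bar>s\<bar> * \<bar>s\<bar> = \<bar>q\<bar> * \<bar>r\<bar>" using ssq by (metis abs_minus_cancel abs_mult)
  have "\<bar>q\<bar> \<le> \<bar>s\<bar>"
  proof (rule ccontr)
    assume "\<not> \<bar>q\<bar> \<le> \<bar>s\<bar>"
    then have "\<bar>s\<bar> * \<bar>s\<bar> < \<bar>q\<bar> * \<bar>q\<bar>" by (intro mult_strict_mono) auto
    also have "\<dots> \<le> \<bar>q\<bar> * \<bar>r\<bar>" using assms(3) by (intro mult_left_mono) auto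
    finally show False using abs_ssq by simp
  qed
  moreover have "\<bar>s\<bar> \<le> \<bar>r\<bar>"
  proof (rule ccontr)
    assume "\<not> \<bar>s\<bar> \<le> \<bar>r\<bar>"
    then have "\<bar>r\<bar> * \<bar>r\<bar> < \<bar>s\<bar> * \<bar>s\<bar>" by (intro mult_strict_mono) auto
    moreover have "\<bar>q\<bar> * \<bar>r\<bar> \<le> \<bar>r\<bar> * \<bar>r\<bar>" using assms(3) by (intro mult_right_mono) auto
    ultimately show False using abs_ssq by simp
  qed
  moreover have "q * r < 0"
    using ssq \<open>q \<noteq> 0\<close> assms(3) by (smt (verit) mult_eq_0_iff zero_le_square)
  \<comment> \<open>with this \<open>t\<close>, \<open>r + 2 t s - q = sgn r * (\<bar>r\<bar> + \<bar>q\<bar> - 2 \<bar>s\<bar>)\<close>\<close>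
  ultimately have "\<bar>r + 2 * t * s - q\<bar> < \<bar>r\<bar>" if "t = - (sgn s * sgn r)" for t
    using \<open>q \<noteq> 0\<close> that by (auto simp: abs_if sgn_if mult_less_0_iff)
  moreover have "- (sgn s * sgn r) = 1 \<or> - (sgn s * sgn r) = -1"
    using \<open>q * r < 0\<close> ssq by (auto simp: sgn_if)
  ultimately show ?thesis using that by blast
qed

lemma AutZ_reduce_lat_e:
  assumes "\<chi> \<in> AutZ" and "\<chi> lat_e = lat (2 * s) q r"
  shows "\<exists>g\<in>Ggrp. \<exists>q'. (g \<otimes>\<^bsub>BijSL2\<^esub> \<chi>) lat_e = lat 0 q' 0"
  using assms
proof (induction "nat (\<bar>q\<bar> + \<bar>r\<bar>)" arbitrary: \<chi> s q r rule: less_induct)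
  case less
  interpret BijSL2: group "BijSL2 :: ('a m2 \<Rightarrow> 'a m2) monoid" by (rule group_BijSL2)
  have \<chi>: "\<chi> \<in> AutZ" and e: "\<chi> lat_e = lat (2 * s) q r" using less.prems by auto
  have ssq: "s * s = - (q * r)" using AutZ_lat_e_nilpotent[OF \<chi> e] by simp
  have apply_e: "(g \<otimes>\<^bsub>BijSL2\<^esub> \<chi>) lat_e = g (lat (2 * s) q r)" if "g \<in> Ggrp" for g
    using AutZ_mult_apply[OF _ \<chi>] that Ggrp_subset_AutZ e by auto
  have reduce: "\<exists>g\<in>Ggrp. \<exists>q'. (g \<otimes>\<^bsub>BijSL2\<^esub> \<chi>) lat_e = lat 0 q' 0"
    if l: "l \<in> Ggrp" and l_e: "(l \<otimes>\<^bsub>BijSL2\<^esub> \<chi>) lat_e = lat (2 * s') q' r'"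
      and smaller: "\<bar>q'\<bar> + \<bar>r'\<bar> < \<bar>q\<bar> + \<bar>r\<bar>" for l s' q' r'
  proof -
    have "l \<otimes>\<^bsub>BijSL2\<^esub> \<chi> \<in> AutZ"
      using subgroup.m_closed[OF AutZ_subgroup] l Ggrp_subset_AutZ \<chi> by blast
    then obtain g q'' where "g \<in> Ggrp" "(g \<otimes>\<^bsub>BijSL2\<^esub> (l \<otimes>\<^bsub>BijSL2\<^esub> \<chi>)) lat_e = lat 0 q'' 0"
      using less.hyps[of q' r'] l_e smaller by fastforce
    moreover have "g \<otimes>\<^bsub>BijSL2\<^esub> (l \<otimes>\<^bsub>BijSL2\<^esub> \<chi>) = (g \<otimes>\<^bsub>BijSL2\<^esub> l) \<otimes>\<^bsub>BijSL2\<^esub> \<chi>"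
      by (rule BijSL2.m_assoc[symmetric])
        (use \<open>g \<in> Ggrp\<close> l \<chi> in \<open>auto intro: AutZ_Bij Ggrp_subset_AutZ[THEN subsetD]\<close>)
    ultimately show ?thesis
      using subgroup.m_closed[OF Ggrp_subgroup \<open>g \<in> Ggrp\<close> l] by metis
  qed
  consider "r = 0" | "q = 0" "r \<noteq> 0" | "q \<noteq> 0" "\<bar>q\<bar> \<le> \<bar>r\<bar>" | "r \<noteq> 0" "\<bar>r\<bar> \<le> \<bar>q\<bar>"
    by linarith
  then show ?case
  proof cases
    case 1
    then have "(\<one>\<^bsub>BijSL2\<^esub> \<otimes>\<^bsub>BijSL2\<^esub> \<chi>) lat_e = lat 0 q 0"
      using ssq e AutZ_Bij[OF \<chi>] by simp
    then show ?thesis using subgroup.one_closed[OF Ggrp_subgroup] by blast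
  next
    case 2
    let ?g = "conj_SL2 1 1 (-1) 0 :: 'a m2 \<Rightarrow> 'a m2"
    have "?g = conj_SL2 1 0 (-1) 1 \<otimes>\<^bsub>BijSL2\<^esub> conj_SL2 1 1 0 1"
      by (simp add: conj_SL2_mult)
    then have "?g \<in> Ggrp"
      using subgroup.m_closed[OF Ggrp_subgroup conj_SL2_lower_in_Ggrp conj_SL2_upper_in_Ggrp]
      by simp
    moreover have "(?g \<otimes>\<^bsub>BijSL2\<^esub> \<chi>) lat_e = lat 0 (- r) 0"
      using apply_e[OF calculation] 2 ssq by (simp add: conj_SL2_lat)
    ultimately show ?thesis by blast
  next
    case 3
    then obtain t where t: "t = 1 \<or> t = -1" and lt: "\<bar>r + 2 * t * s - q\<bar> < \<bar>r\<bar>"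
      using int_descent_step[OF ssq] by blast
    have "(conj_SL2 1 0 t 1 \<otimes>\<^bsub>BijSL2\<^esub> \<chi>) lat_e = lat (2 * (s - t * q)) q (r + 2 * t * s - q)"
      using apply_e[OF conj_SL2_lower_in_Ggrp] t by (auto simp: conj_SL2_lat)
    from reduce[OF conj_SL2_lower_in_Ggrp this] lt show ?thesis by simp
  next
    case 4
    have "s * s = - (r * q)" using ssq by (simp add: mult.commute)
    then obtain t where t: "t = 1 \<or> t = -1" and lt: "\<bar>q + 2 * t * s - r\<bar> < \<bar>q\<bar>"
      using int_descent_step 4 by blast
    have "(conj_SL2 1 (- t) 0 1 \<otimes>\<^bsub>BijSL2\<^esub> \<chi>) lat_e = lat (2 * (s - t * r)) (q + 2 * t * s - r) r"
      using apply_e[OF conj_SL2_upper_in_Ggrp] t by (auto simp: conj_SL2_lat)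
    from reduce[OF conj_SL2_upper_in_Ggrp this] lt show ?thesis by simp
  qed
qed

lemma neg_swap_xy_lat_e: "neg_swap_xy lat_e = msmult (-1) lat_e"
  by (simp add: lat_e_def neg_swap_lat) (simp add: lat_def)

lemma AutZ_in_Ggrp_or_mult_neg_swap_xy:
  assumes \<chi>: "\<chi> \<in> AutZ"
  shows "\<chi> \<in> Ggrp \<or> \<chi> \<otimes>\<^bsub>BijSL2\<^esub> neg_swap_xy \<in> Ggrp"
proof -
  interpret BijSL2: group "BijSL2 :: ('a m2 \<Rightarrow> 'a m2) monoid" by (rule group_BijSL2)
  obtain s q r where "\<chi> lat_e = lat (2 * s) q r" using AutZ_lat_e[OF \<chi>] .
  then obtain g q' where g: "g \<in> Ggrp" and e: "(g \<otimes>\<^bsub>BijSL2\<^esub> \<chi>) lat_e = lat 0 q' 0"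
    using AutZ_reduce_lat_e[OF \<chi>] by blast
  have g_AutZ: "g \<in> AutZ" using g Ggrp_subset_AutZ by blast
  have g\<chi>: "g \<otimes>\<^bsub>BijSL2\<^esub> \<chi> \<in> AutZ" using subgroup.m_closed[OF AutZ_subgroup g_AutZ \<chi>] .
  have cancel: "\<psi> \<in> Ggrp" if \<psi>: "\<psi> \<in> AutZ" and "(g \<otimes>\<^bsub>BijSL2\<^esub> \<psi>) lat_e = lat_e" for \<psi>
  proof -
    have "g \<otimes>\<^bsub>BijSL2\<^esub> \<psi> \<in> Ggrp"
      using AutZ_fixing_lat_e_in_Ggrp subgroup.m_closed[OF AutZ_subgroup g_AutZ \<psi>] that(2) .
    then show ?thesis
      using BijSL2.subgroup_mult_cancel_left[OF Ggrp_subgroup g] AutZ_Bij[OF \<psi>] by simp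
  qed
  from AutZ_lat_e_unimodular[OF g\<chi> e] show ?thesis
  proof
    assume "q' = 1"
    then show ?thesis using cancel[OF \<chi>] e by (simp add: lat_e_def)
  next
    assume "q' = -1"
    let ?\<sigma> = "neg_swap_xy :: 'a m2 \<Rightarrow> 'a m2"
    have \<sigma>: "?\<sigma> \<in> AutZ" using neg_swap_xy_AutZ by blast
    have "g \<otimes>\<^bsub>BijSL2\<^esub> (\<chi> \<otimes>\<^bsub>BijSL2\<^esub> ?\<sigma>) = g \<otimes>\<^bsub>BijSL2\<^esub> \<chi> \<otimes>\<^bsub>BijSL2\<^esub> ?\<sigma>"
      by (rule BijSL2.m_assoc[symmetric]) (use g_AutZ \<chi> \<sigma> in \<open>simp_all add: AutZ_Bij\<close>)
    then have "(g \<otimes>\<^bsub>BijSL2\<^esub> (\<chi> \<otimes>\<^bsub>BijSL2\<^esub> ?\<sigma>)) lat_e = (g \<otimes>\<^bsub>BijSL2\<^esub> \<chi>) (msmult (-1) lat_e)"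
      by (simp add: AutZ_mult_apply[OF g\<chi> \<sigma>] neg_swap_xy_lat_e)
    also have "\<dots> = msmult (-1) ((g \<otimes>\<^bsub>BijSL2\<^esub> \<chi>) lat_e)"
      using lie_aut_smult[OF AutZ_lie_aut[OF g\<chi>] lat_hef_in_sl2(2)] .
    also have "\<dots> = lat_e"
      using e \<open>q' = -1\<close> by (simp add: lat_e_def lat_def)
    finally show ?thesis
      using cancel subgroup.m_closed[OF AutZ_subgroup \<chi> \<sigma>] by blast
  qed
qed

lemma AutZ_cover_neg_swap_xy: "\<forall>k\<in>AutZ. k \<in> Ggrp \<or> neg_swap_xy \<otimes>\<^bsub>BijSL2\<^esub> k \<in> Ggrp"
proof
  interpret BijSL2: group "BijSL2 :: ('a m2 \<Rightarrow> 'a m2) monoid" by (rule group_BijSL2)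
  let ?\<sigma> = "neg_swap_xy :: 'a m2 \<Rightarrow> 'a m2"
  fix k :: "'a m2 \<Rightarrow> 'a m2" assume k: "k \<in> AutZ"
  have carrier: "k \<in> carrier BijSL2" "?\<sigma> \<in> carrier BijSL2"
    using k neg_swap_xy_AutZ AutZ_Bij by auto
  have "inv\<^bsub>BijSL2\<^esub> ?\<sigma> = ?\<sigma>"
    using BijSL2.inv_equality neg_swap_xy_AutZ carrier by blast
  then have "inv\<^bsub>BijSL2\<^esub> (inv\<^bsub>BijSL2\<^esub> k \<otimes>\<^bsub>BijSL2\<^esub> ?\<sigma>) = ?\<sigma> \<otimes>\<^bsub>BijSL2\<^esub> k"
    using carrier BijSL2.inv_closed[OF carrier(1)] by (simp add: BijSL2.inv_mult_group)
  moreover have "inv\<^bsub>BijSL2\<^esub> k \<in> Ggrp \<or> inv\<^bsub>BijSL2\<^esub> k \<otimes>\<^bsub>BijSL2\<^esub> ?\<sigma> \<in> Ggrp"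
    using AutZ_in_Ggrp_or_mult_neg_swap_xy subgroup.m_inv_closed[OF AutZ_subgroup k] by blast
  ultimately show "k \<in> Ggrp \<or> ?\<sigma> \<otimes>\<^bsub>BijSL2\<^esub> k \<in> Ggrp"
    using subgroup.m_inv_closed[OF Ggrp_subgroup] carrier by (metis BijSL2.inv_inv)
qed

theorem theorem5p6:
  shows "internal_semidirect (BijGroup (sl2::'a::field_char_0 m2 set)) AutZ
           (generate (BijGroup sl2) {neg_swap_xy}) Ggrp
       \<and> internal_semidirect (BijGroup (sl2::'a m2 set)) AutZ
           (generate (BijGroup sl2) {neg_swap_yz}) Ggrp
       \<and> internal_semidirect (BijGroup (sl2::'a m2 set)) AutZ
           (generate (BijGroup sl2) {neg_swap_zx}) Ggrp
       \<and> card (generate (BijGroup (sl2::'a m2 set)) {neg_swap_xy}) = 2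
       \<and> card (generate (BijGroup (sl2::'a m2 set)) {neg_swap_yz}) = 2
       \<and> card (generate (BijGroup (sl2::'a m2 set)) {neg_swap_zx}) = 2"
proof -
  interpret BijSL2: group "BijSL2 :: ('a m2 \<Rightarrow> 'a m2) monoid" by (rule group_BijSL2)
  have cover: "\<forall>k\<in>AutZ. k \<in> Ggrp \<or> \<sigma> \<otimes>\<^bsub>BijSL2\<^esub> k \<in> Ggrp"
    if "\<sigma> \<in> AutZ \<and> \<sigma> \<otimes>\<^bsub>BijSL2\<^esub> \<sigma> = \<one>\<^bsub>BijSL2\<^esub>" and "\<sigma> \<notin> Ggrp" for \<sigma> :: "'a m2 \<Rightarrow> 'a m2"
    using BijSL2.involution_cover_transfer[OF Ggrp_subgroup _ _ _ _ _ _ _ AutZ_cover_neg_swap_xy]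
      that neg_swap_xy_AutZ AutZ_Bij by auto
  have "internal_semidirect BijSL2 AutZ (generate BijSL2 {\<sigma>}) Ggrp \<and> card (generate BijSL2 {\<sigma>}) = 2"
    if "\<sigma> \<in> AutZ \<and> \<sigma> \<otimes>\<^bsub>BijSL2\<^esub> \<sigma> = \<one>\<^bsub>BijSL2\<^esub>" and "\<sigma> \<notin> Ggrp" for \<sigma> :: "'a m2 \<Rightarrow> 'a m2"
    using BijSL2.internal_semidirect_of_involution[OF AutZ_subgroup Ggrp_subgroup Ggrp_subset_AutZ]
      that cover[OF that] by blast
  then show ?thesis
    using neg_swap_xy_AutZ neg_swap_yz_AutZ neg_swap_zx_AutZ neg_swap_not_in_Ggrp by blast
qed

end
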